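(* Suppose $k=n-q+2$ and let $x,y\in G\setminus K$ with $x\ne y$. Then there is $(v,w)\in\mathrm{diff}(\circ,\ast)$ such that $\{v,w,v\circ w\}\cap\{x,y\}=\emptyset$, $v\in G\setminus K$, and $w\in K$ or $v\circ w\in K$.
   Context: $G$ is a set of size $n$ and $G(\circ)$, $G(\ast)$ are distinct groups on $G$ with the same identity element $1$, and $\mathrm{dist}_1=0$. $\mathrm{diff}(\circ,\ast)=\{(a,b):a\circ b\ne a\ast b\}$, $\mathrm{dist}_a=|\{b:a\circ b\ne a\ast b\}|$; $K=\{a:\mathrm{dist}_a<n/3\}$, $k=|K|$; $q=\lceil n/3\rceil$. *)

theory Defs
  imports Complex_Main "HOL-Algebra.Group"
begin

text \<open>Two group structures A (operation \<circ>) and B (operation \<ast>) on the same carrier.\<close>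

definition diff_set :: "('a, 'm) monoid_scheme \<Rightarrow> ('a, 'n) monoid_scheme \<Rightarrow> ('a \<times> 'a) set" where
  "diff_set A B = {(a, b). a \<in> carrier A \<and> b \<in> carrier A \<and> a \<otimes>\<^bsub>A\<^esub> b \<noteq> a \<otimes>\<^bsub>B\<^esub> b}"

definition dist_el :: "('a, 'm) monoid_scheme \<Rightarrow> ('a, 'n) monoid_scheme \<Rightarrow> 'a \<Rightarrow> nat" where
  "dist_el A B a = card {b \<in> carrier A. a \<otimes>\<^bsub>A\<^esub> b \<noteq> a \<otimes>\<^bsub>B\<^esub> b}"

definition K_set :: "('a, 'm) monoid_scheme \<Rightarrow> ('a, 'n) monoid_scheme \<Rightarrow> 'a set" where
  "K_set A B = {a \<in> carrier A. real (dist_el A B a) < real (card (carrier A)) / 3}"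

end

theory Submission
  imports Defs
begin

text \<open>
  Write \<open>d(a)\<close> for the number of \<open>b\<close> with \<open>a \<cdot> b \<noteq> a \<star> b\<close>. If \<open>a \<cdot> b \<noteq> a \<star> b\<close>, then every
  \<open>c\<close> disagrees with \<open>b\<close>, or \<open>b \<cdot> c\<close> disagrees with \<open>a\<close>, or \<open>c\<close> distinguishes \<open>a \<cdot> b\<close> from
  \<open>a \<star> b\<close> in both groups; hence \<open>n \<le> d(a) + d(b) + d(a \<cdot> b)\<close>, and likewise with \<open>a \<star> b\<close>.

  The hypothesis on \<open>|K|\<close> says that \<open>G - K\<close> has \<open>q - 2\<close> elements. If it contains some \<open>v\<close>
  besides \<open>x\<close> and \<open>y\<close>, then \<open>d(v) \<ge> q\<close> exceeds \<open>|G - K| + 1\<close>, and counting leaves a \<open>w\<close> with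
  \<open>v \<cdot> w \<noteq> v \<star> w\<close> such that \<open>w\<close> and \<open>v \<cdot> w\<close> avoid \<open>x, y\<close> and one of them lies in \<open>K\<close>.
  Otherwise \<open>G - K = {x, y}\<close>, so \<open>q = 4\<close>, \<open>10 \<le> n \<le> 12\<close> and \<open>d \<le> 3\<close> off \<open>{x, y}\<close>. The
  inequality then makes the two products agree whenever both factors and one of the products
  avoid \<open>x, y\<close>. Factoring \<open>x = a \<cdot> (a\<inverse> \<cdot> x)\<close> through suitable \<open>a\<close> shows that
  \<open>a \<star> (a\<inverse> \<cdot> x) = x\<close> (the value \<open>y\<close> would force \<open>d(a) \<ge> 4\<close>), and then \<open>x \<cdot> c = x \<star> c\<close>
  for all but three \<open>c\<close>, contradicting \<open>d(x) \<ge> 4\<close>.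
\<close>

lemma ceiling_third_le_iff: "\<lceil>real n / 3\<rceil> \<le> int d \<longleftrightarrow> n \<le> 3 * d"
  unfolding ceiling_le_iff by linarith

lemma card_preimage_le:
  assumes "inj_on f S" and "finite M"
  shows "card {c \<in> S. f c \<in> M} \<le> card M"
proof -
  have "inj_on f {c \<in> S. f c \<in> M}" using assms(1) by (rule inj_on_subset) auto
  then show ?thesis using card_inj_on_le[of f _ M] assms(2) by auto
qed

lemma card_preimage_minus_le:
  assumes "inj_on f S" and "finite M" and "s \<in> S" and "f s \<in> M"
  shows "card ({c \<in> S. f c \<in> M} - {s}) \<le> card M - 1"
  using card_preimage_le[OF assms(1,2)] assms(3,4) by (simp add: card_Diff_singleton)

lemma card_Union_list_le: "card (\<Union>(set Xs)) \<le> (\<Sum>X\<leftarrow>Xs. card X)"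
proof (induction Xs)
  case (Cons X Xs)
  then show ?case using card_Un_le[of X "\<Union>(set Xs)"] by simp
qed simp

lemma exists_notin_Union_list:
  assumes "finite S" and "\<forall>X \<in> set Xs. finite X" and "(\<Sum>X\<leftarrow>Xs. card X) < card S"
  shows "\<exists>s \<in> S. \<forall>X \<in> set Xs. s \<notin> X"
proof -
  have "card (\<Union>(set Xs)) < card S" using card_Union_list_le assms(3) by (rule le_less_trans)
  then have "\<not> S \<subseteq> \<Union>(set Xs)" using assms(2) card_mono[of "\<Union>(set Xs)" S] by auto
  then show ?thesis by blast
qed

lemma (in group) inj_on_inv_mult:
  assumes "g \<in> carrier G"
  shows "inj_on (\<lambda>a. inv a \<otimes> g) (carrier G)"
proof (rule inj_onI)
  fix a b assume a: "a \<in> carrier G" and b: "b \<in> carrier G" and "inv a \<otimes> g = inv b \<otimes> g"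
  then have "inv (inv a) = inv (inv b)" using assms by simp
  then show "a = b" using a b by simp
qed

locale two_groups = A: group A + B: group B
  for A :: "('a, 'm) monoid_scheme" and B :: "('a, 'n) monoid_scheme" +
  assumes carrier_eq [simp]: "carrier B = carrier A"
    and one_eq: "\<one>\<^bsub>B\<^esub> = \<one>\<^bsub>A\<^esub>"
    and finite_carrier: "finite (carrier A)"
begin

abbreviation mult_A (infixl "\<cdot>" 70) where "a \<cdot> b \<equiv> a \<otimes>\<^bsub>A\<^esub> b"
abbreviation mult_B (infixl "\<star>" 70) where "a \<star> b \<equiv> a \<otimes>\<^bsub>B\<^esub> b"

definition disagree :: "'a \<Rightarrow> 'a set" where
  "disagree a = {b \<in> carrier A. a \<cdot> b \<noteq> a \<star> b}"

lemma mult_B_closed [simp]: "a \<in> carrier A \<Longrightarrow> b \<in> carrier A \<Longrightarrow> a \<star> b \<in> carrier A"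
  using B.m_closed by simp

lemma dist_el_eq_card_disagree: "dist_el A B a = card (disagree a)"
  by (simp add: dist_el_def disagree_def)

lemma disagree_subset_carrier: "disagree a \<subseteq> carrier A"
  by (auto simp: disagree_def)

lemma finite_disagree: "finite (disagree a)"
  using disagree_subset_carrier finite_carrier by (rule finite_subset)

lemma one_notin_disagree: "a \<in> carrier A \<Longrightarrow> \<one>\<^bsub>A\<^esub> \<notin> disagree a"
  using B.r_one[of a] by (simp add: disagree_def one_eq)

lemma mem_K_set_iff: "a \<in> K_set A B \<longleftrightarrow> a \<in> carrier A \<and> 3 * card (disagree a) < card (carrier A)"
  by (auto simp: K_set_def dist_el_eq_card_disagree)

text \<open>Unless \<open>c\<close> lies in one of the first two sets, associativity in both groups gives
  \<open>(a \<cdot> b) \<cdot> c = (a \<star> b) \<star> c\<close>; as \<open>a \<cdot> b \<noteq> a \<star> b\<close>, cancelling \<open>c\<close> is then impossible in either group.\<close>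
lemma carrier_subset_disagree_cover:
  assumes a: "a \<in> carrier A" and b: "b \<in> carrier A" and ne: "a \<cdot> b \<noteq> a \<star> b"
  shows "carrier A \<subseteq> disagree b \<union> {c \<in> carrier A. b \<cdot> c \<in> disagree a}
           \<union> (disagree (a \<cdot> b) \<inter> disagree (a \<star> b))"
proof
  fix c assume c: "c \<in> carrier A"
  show "c \<in> disagree b \<union> {c \<in> carrier A. b \<cdot> c \<in> disagree a} \<union> (disagree (a \<cdot> b) \<inter> disagree (a \<star> b))"
  proof (rule ccontr)
    assume "\<not> ?thesis"
    then have bc: "b \<cdot> c = b \<star> c" and abc: "a \<cdot> (b \<cdot> c) = a \<star> (b \<cdot> c)"
      and cases: "c \<notin> disagree (a \<cdot> b) \<or> c \<notin> disagree (a \<star> b)"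
      using a b c by (auto simp: disagree_def)
    have "(a \<cdot> b) \<cdot> c = a \<cdot> (b \<cdot> c)" using a b c by (simp add: A.m_assoc)
    also have "\<dots> = (a \<star> b) \<star> c" using a b c abc bc by (simp add: B.m_assoc)
    finally have eq: "(a \<cdot> b) \<cdot> c = (a \<star> b) \<star> c" .
    from cases show False
    proof
      assume "c \<notin> disagree (a \<cdot> b)"
      then have "(a \<cdot> b) \<star> c = (a \<star> b) \<star> c" using a b c eq by (simp add: disagree_def)
      then show False using a b c ne by simp
    next
      assume "c \<notin> disagree (a \<star> b)"
      then have "(a \<cdot> b) \<cdot> c = (a \<star> b) \<cdot> c" using a b c eq by (simp add: disagree_def)
      then show False using a b c ne by simp
    qed
  qed
qed

lemma card_carrier_le_disagree_sum:
  assumes a: "a \<in> carrier A" and b: "b \<in> carrier A" and ne: "a \<cdot> b \<noteq> a \<star> b"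
    and d: "d = a \<cdot> b \<or> d = a \<star> b"
  shows "card (carrier A) \<le> card (disagree a) + card (disagree b) + card (disagree d)"
proof -
  let ?S = "{c \<in> carrier A. b \<cdot> c \<in> disagree a}"
  have "carrier A \<subseteq> disagree b \<union> ?S \<union> disagree d"
    using carrier_subset_disagree_cover[OF a b ne] d by blast
  then have "card (carrier A) \<le> card (disagree b \<union> ?S \<union> disagree d)"
    by (intro card_mono) (simp_all add: finite_disagree finite_carrier)
  also have "\<dots> \<le> card (disagree b) + card ?S + card (disagree d)"
    using card_Un_le[of "disagree b \<union> ?S" "disagree d"] card_Un_le[of "disagree b" ?S] by linarith
  also have "card ?S \<le> card (disagree a)"
    using card_preimage_le[OF A.inj_on_cmult[OF b] finite_disagree] .
  finally show ?thesis by linarith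
qed

lemma exists_disagreement_avoiding:
  assumes U: "U \<subseteq> carrier A" and v: "v \<in> U" and x: "x \<in> U" and y: "y \<in> U"
    and large: "card U + 2 \<le> card (disagree v)"
  shows "\<exists>w \<in> disagree v. w \<notin> {x, y} \<and> v \<cdot> w \<notin> {x, y} \<and> (w \<notin> U \<or> v \<cdot> w \<notin> U)"
proof (rule ccontr)
  assume "\<not> ?thesis"
  then have "\<forall>w \<in> disagree v. w \<in> {x, y} \<or> v \<cdot> w \<in> U"
    using x y by blast
  let ?T = "{w \<in> carrier A. v \<cdot> w \<in> U} - {\<one>\<^bsub>A\<^esub>}"
  have vG: "v \<in> carrier A" using U v by blast
  have fU: "finite U" using U finite_carrier by (rule finite_subset)
  have "disagree v \<subseteq> {x, y} \<union> ?T"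
    using \<open>\<forall>w \<in> disagree v. _\<close> disagree_subset_carrier one_notin_disagree[OF vG] by blast
  then have "card (disagree v) \<le> card ({x, y} \<union> ?T)"
    using finite_carrier by (intro card_mono) auto
  also have "\<dots> \<le> card {x, y} + card ?T" by (rule card_Un_le)
  also have "\<dots> \<le> 2 + (card U - 1)"
    using card_preimage_minus_le[OF A.inj_on_cmult[OF vG] fU, of "\<one>\<^bsub>A\<^esub>"] vG v
      card_insert_le_m1[of 2 "{y}" x] by simp
  finally show False using large card_gt_0_iff[of U] fU v by auto
qed

end

locale two_exceptions = two_groups +
  fixes x y :: 'a
  assumes x_in: "x \<in> carrier A" and y_in: "y \<in> carrier A" and x_ne_y: "x \<noteq> y"
    and card_carrier_ge: "10 \<le> card (carrier A)"
    and card_disagree_le: "\<lbrakk>a \<in> carrier A; a \<notin> {x, y}\<rbrakk> \<Longrightarrow> card (disagree a) \<le> 3"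
begin

lemma card_exceptions: "card {x, y} = 2"
  using x_ne_y by simp

lemma mult_agree_off_exceptions:
  assumes a: "a \<in> carrier A" and c: "c \<in> carrier A" and "a \<notin> {x, y}" and "c \<notin> {x, y}"
    and "a \<cdot> c \<notin> {x, y} \<or> a \<star> c \<notin> {x, y}"
  shows "a \<cdot> c = a \<star> c"
proof (rule ccontr)
  assume ne: "a \<cdot> c \<noteq> a \<star> c"
  have "card (carrier A) \<le> 9" if d: "d = a \<cdot> c \<or> d = a \<star> c" and "d \<notin> {x, y}" for d
  proof -
    have "d \<in> carrier A" using d a c by auto
    then show ?thesis
      using card_carrier_le_disagree_sum[OF a c ne d] card_disagree_le[of d] that
        card_disagree_le[OF a \<open>a \<notin> {x, y}\<close>] card_disagree_le[OF c \<open>c \<notin> {x, y}\<close>] by linarith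
  qed
  then show False using assms(5) card_carrier_ge by fastforce
qed

lemma card_left_preimage_exceptions:
  "g \<in> carrier A \<Longrightarrow> card {c \<in> carrier A. g \<cdot> c \<in> {x, y}} \<le> 2"
  using card_preimage_le[OF A.inj_on_cmult, of g "{x, y}"] card_exceptions by simp

definition admissible :: "'a \<Rightarrow> bool" where
  "admissible a \<longleftrightarrow> a \<in> carrier A \<and> a \<notin> {x, y} \<and> inv\<^bsub>A\<^esub> a \<cdot> x \<notin> {x, y}
     \<and> inv\<^bsub>A\<^esub> a \<cdot> y \<notin> {x, y} \<and> a \<cdot> x \<notin> {x, y}"

lemma exists_admissible:
  assumes p: "p \<in> carrier A"
  shows "\<exists>a. admissible a \<and> (inv\<^bsub>A\<^esub> a \<cdot> x) \<cdot> p \<notin> {x, y}"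
proof -
  let ?P = "\<lambda>g. {a \<in> carrier A. inv\<^bsub>A\<^esub> a \<cdot> g \<in> {x, y}}"
  let ?Q = "{a \<in> carrier A. a \<cdot> x \<in> {x, y}}"
  have P: "card (?P g - {\<one>\<^bsub>A\<^esub>}) \<le> 1" if "g \<in> {x, y}" for g
    using card_preimage_minus_le[OF A.inj_on_inv_mult, of g "{x, y}" "\<one>\<^bsub>A\<^esub>"] that
      x_in y_in card_exceptions by auto
  have Q: "card (?Q - {\<one>\<^bsub>A\<^esub>}) \<le> 1"
    using card_preimage_minus_le[OF A.inj_on_multc[OF x_in], of "{x, y}" "\<one>\<^bsub>A\<^esub>"]
      x_in card_exceptions by auto
  have xp: "x \<cdot> p \<in> carrier A" using x_in p by simp
  have "card (?P (x \<cdot> p)) \<le> 2"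
    using card_preimage_le[OF A.inj_on_inv_mult[OF xp], of "{x, y}"] card_exceptions by simp
  let ?L = "[{x, y}, {\<one>\<^bsub>A\<^esub>}, ?P x - {\<one>\<^bsub>A\<^esub>}, ?P y - {\<one>\<^bsub>A\<^esub>}, ?Q - {\<one>\<^bsub>A\<^esub>}, ?P (x \<cdot> p)]"
  have "(\<Sum>X\<leftarrow>?L. card X) < card (carrier A)"
    using P[of x] P[of y] Q \<open>card (?P (x \<cdot> p)) \<le> 2\<close> card_exceptions card_carrier_ge by simp
  moreover have "\<forall>X \<in> set ?L. finite X" using finite_carrier by simp
  ultimately obtain a where "a \<in> carrier A" and "\<forall>X \<in> set ?L. a \<notin> X"
    using exists_notin_Union_list[OF finite_carrier] by blast
  then have "admissible a \<and> (inv\<^bsub>A\<^esub> a \<cdot> x) \<cdot> p \<notin> {x, y}"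
    using x_in p by (auto simp: admissible_def A.m_assoc)
  then show ?thesis ..
qed

lemma admissible_mult_B_mem:
  assumes "admissible a"
  shows "a \<star> (inv\<^bsub>A\<^esub> a \<cdot> x) \<in> {x, y}"
proof (rule ccontr)
  assume nmem: "a \<star> (inv\<^bsub>A\<^esub> a \<cdot> x) \<notin> {x, y}"
  have a: "a \<in> carrier A" using assms by (simp add: admissible_def)
  have "a \<cdot> (inv\<^bsub>A\<^esub> a \<cdot> x) = a \<star> (inv\<^bsub>A\<^esub> a \<cdot> x)"
    using assms nmem x_in by (intro mult_agree_off_exceptions) (auto simp: admissible_def)
  moreover have "a \<cdot> (inv\<^bsub>A\<^esub> a \<cdot> x) = x"
    using a x_in by (simp flip: A.m_assoc)
  ultimately show False using nmem by simp
qed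

text \<open>Here \<open>x = a \<cdot> b\<close> with \<open>b = a\<inverse> \<cdot> x\<close>, and both factors avoid \<open>{x, y}\<close>, so agreement
  of the two products can be applied to \<open>a \<cdot> (b \<cdot> c)\<close> and to \<open>b \<cdot> c\<close>.\<close>
lemma mult_A_x_via_admissible:
  assumes "admissible a" and c: "c \<in> carrier A" and "c \<notin> {x, y}" and "x \<cdot> c \<notin> {x, y}"
    and "(inv\<^bsub>A\<^esub> a \<cdot> x) \<cdot> c \<notin> {x, y}"
  shows "x \<cdot> c = (a \<star> (inv\<^bsub>A\<^esub> a \<cdot> x)) \<star> c"
proof -
  define b where "b = inv\<^bsub>A\<^esub> a \<cdot> x"
  have a: "a \<in> carrier A" "a \<notin> {x, y}" and b: "b \<in> carrier A" "b \<notin> {x, y}"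
    using assms(1) x_in by (auto simp: admissible_def b_def)
  have ab: "a \<cdot> b = x" using a x_in by (simp add: b_def flip: A.m_assoc)
  have "x \<cdot> c = a \<cdot> (b \<cdot> c)" using a b c ab by (simp flip: A.m_assoc)
  also have "\<dots> = a \<star> (b \<cdot> c)"
    using a b c assms(4,5) \<open>x \<cdot> c = a \<cdot> (b \<cdot> c)\<close> b_def
    by (intro mult_agree_off_exceptions) auto
  also have "b \<cdot> c = b \<star> c"
    using b c assms(3,5) b_def by (intro mult_agree_off_exceptions) auto
  also have "a \<star> (b \<star> c) = (a \<star> b) \<star> c" using a b c by (simp add: B.m_assoc)
  finally show ?thesis by (simp add: b_def)
qed

lemma admissible_mult_B_y_eq:
  assumes "admissible a" and to_y: "a \<star> (inv\<^bsub>A\<^esub> a \<cdot> x) = y"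
  shows "a \<star> y = a \<cdot> x"
proof -
  define b where "b = inv\<^bsub>A\<^esub> a \<cdot> x"
  have a: "a \<in> carrier A" "a \<notin> {x, y}" "a \<cdot> x \<notin> {x, y}" and b: "b \<in> carrier A"
    using assms(1) x_in by (auto simp: admissible_def b_def)
  let ?L = "[{x, y}, {c \<in> carrier A. x \<cdot> c \<in> {x, y}}, {c \<in> carrier A. b \<cdot> c \<in> {x, y}},
             {c \<in> carrier A. (a \<cdot> x) \<cdot> c \<in> {x, y}}]"
  have "(\<Sum>X\<leftarrow>?L. card X) < card (carrier A)"
    using card_exceptions card_left_preimage_exceptions[of x] card_left_preimage_exceptions[of b]
      card_left_preimage_exceptions[of "a \<cdot> x"] x_in a b card_carrier_ge by simp
  moreover have "\<forall>X \<in> set ?L. finite X" using finite_carrier by simp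
  ultimately obtain c where c: "c \<in> carrier A" and "\<forall>X \<in> set ?L. c \<notin> X"
    using exists_notin_Union_list[OF finite_carrier] by blast
  then have c_off: "c \<notin> {x, y}" "x \<cdot> c \<notin> {x, y}" "b \<cdot> c \<notin> {x, y}" "(a \<cdot> x) \<cdot> c \<notin> {x, y}"
    by auto
  have "(a \<star> y) \<star> c = a \<star> (x \<cdot> c)"
    using mult_A_x_via_admissible[OF assms(1) c c_off(1,2)] c_off(3) to_y a c x_in y_in
    by (simp add: b_def B.m_assoc)
  also have "\<dots> = a \<cdot> (x \<cdot> c)"
    using a c x_in c_off by (intro mult_agree_off_exceptions[symmetric]) (auto simp: A.m_assoc)
  also have "\<dots> = (a \<cdot> x) \<cdot> c" using a c x_in by (simp add: A.m_assoc)
  also have "\<dots> = (a \<cdot> x) \<star> c"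
    using a c x_in c_off by (intro mult_agree_off_exceptions) auto
  finally show ?thesis using a c x_in y_in by simp
qed

lemma admissible_mult_B_ne_y:
  assumes "admissible a"
  shows "a \<star> (inv\<^bsub>A\<^esub> a \<cdot> x) \<noteq> y"
proof
  assume to_y: "a \<star> (inv\<^bsub>A\<^esub> a \<cdot> x) = y"
  define b b' where "b = inv\<^bsub>A\<^esub> a \<cdot> x" and "b' = inv\<^bsub>A\<^esub> a \<cdot> y"
  have a: "a \<in> carrier A" "a \<notin> {x, y}" and b: "b \<in> carrier A" "b \<notin> {x, y}"
    and b': "b' \<in> carrier A" "b' \<notin> {x, y}"
    using assms x_in y_in by (auto simp: admissible_def b_def b'_def)
  have ab: "a \<cdot> b = x" and ab': "a \<cdot> b' = y"
    using a x_in y_in by (simp_all add: b_def b'_def flip: A.m_assoc)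
  have shift: "a \<star> y = a \<cdot> x" by (rule admissible_mult_B_y_eq[OF assms to_y])
  have "b \<noteq> b'" using ab ab' x_ne_y by auto
  have "{x, y, b, b'} \<subseteq> disagree a"
    using a b b' x_in y_in x_ne_y \<open>b \<noteq> b'\<close> ab ab' shift to_y
    by (auto simp: disagree_def b_def)
  moreover have "card {x, y, b, b'} = 4"
    using x_ne_y b(2) b'(2) \<open>b \<noteq> b'\<close> by auto
  ultimately have "4 \<le> card (disagree a)"
    using card_mono[OF finite_disagree] by metis
  then show False using card_disagree_le[OF a] by simp
qed

lemma card_disagree_x_le: "card (disagree x) \<le> 3"
proof -
  let ?T = "{c \<in> carrier A. x \<cdot> c \<in> {x, y}} - {\<one>\<^bsub>A\<^esub>}"
  have "disagree x \<subseteq> {x, y} \<union> ?T"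
  proof
    fix c assume c: "c \<in> disagree x"
    have cG: "c \<in> carrier A" and "c \<noteq> \<one>\<^bsub>A\<^esub>"
      using c disagree_subset_carrier one_notin_disagree[OF x_in] by auto
    show "c \<in> {x, y} \<union> ?T"
    proof (rule ccontr)
      assume "c \<notin> {x, y} \<union> ?T"
      then have off: "c \<notin> {x, y}" "x \<cdot> c \<notin> {x, y}" using cG \<open>c \<noteq> \<one>\<^bsub>A\<^esub>\<close> by auto
      obtain a where a: "admissible a" "(inv\<^bsub>A\<^esub> a \<cdot> x) \<cdot> c \<notin> {x, y}"
        using exists_admissible[OF cG] by blast
      have "a \<star> (inv\<^bsub>A\<^esub> a \<cdot> x) = x"
        using admissible_mult_B_mem[OF a(1)] admissible_mult_B_ne_y[OF a(1)] by blast
      then have "x \<cdot> c = x \<star> c" using mult_A_x_via_admissible[OF a(1) cG off a(2)] by simp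
      then show False using c by (simp add: disagree_def)
    qed
  qed
  then have "card (disagree x) \<le> card ({x, y} \<union> ?T)"
    using finite_carrier by (intro card_mono) auto
  also have "\<dots> \<le> card {x, y} + card ?T" by (rule card_Un_le)
  also have "card ?T \<le> 1"
    using card_preimage_minus_le[OF A.inj_on_cmult[OF x_in], of "{x, y}" "\<one>\<^bsub>A\<^esub>"]
      x_in card_exceptions by simp
  finally show ?thesis using card_exceptions by simp
qed

end

lemma (in two_groups) ceiling_third_le_card_disagree:
  "a \<in> carrier A - K_set A B \<Longrightarrow> \<lceil>real (card (carrier A)) / 3\<rceil> \<le> int (card (disagree a))"
  by (simp add: mem_K_set_iff ceiling_third_le_iff not_less)

lemma (in two_groups) exists_diff_pair_leaving_complement_K:
  assumes card_U: "int (card (carrier A - K_set A B)) + 2 = \<lceil>real (card (carrier A)) / 3\<rceil>"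
    and v: "v \<in> carrier A - K_set A B" "v \<notin> {x, y}"
    and xy: "x \<in> carrier A - K_set A B" "y \<in> carrier A - K_set A B"
  shows "\<exists>w. (v, w) \<in> diff_set A B \<and> {v, w, v \<cdot> w} \<inter> {x, y} = {}
           \<and> (w \<in> K_set A B \<or> v \<cdot> w \<in> K_set A B)"
proof -
  have "card (carrier A - K_set A B) + 2 \<le> card (disagree v)"
    using ceiling_third_le_card_disagree[OF v(1)] card_U by linarith
  then obtain w where w: "w \<in> disagree v" "w \<notin> {x, y}" "v \<cdot> w \<notin> {x, y}"
    and escapes: "w \<notin> carrier A - K_set A B \<or> v \<cdot> w \<notin> carrier A - K_set A B"
    using exists_disagreement_avoiding[OF Diff_subset v(1) xy] by blast
  have "v \<in> carrier A" and "w \<in> carrier A" and "v \<cdot> w \<noteq> v \<star> w"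
    using v(1) w(1) by (auto simp: disagree_def)
  then show ?thesis using v w escapes by (auto simp: diff_set_def)
qed

lemma (in two_groups) complement_K_set_ne_pair:
  assumes q: "\<lceil>real (card (carrier A)) / 3\<rceil> = 4" and "x \<noteq> y"
  shows "carrier A - K_set A B \<noteq> {x, y}"
proof
  assume U: "carrier A - K_set A B = {x, y}"
  have "10 \<le> card (carrier A)" and "card (carrier A) \<le> 12"
    using q ceiling_third_le_iff[of "card (carrier A)" 3] ceiling_third_le_iff[of "card (carrier A)" 4]
    by simp_all
  have small: "card (disagree a) \<le> 3" if "a \<in> carrier A" "a \<notin> {x, y}" for a
  proof -
    have "a \<in> K_set A B" using that U by blast
    then have "3 * card (disagree a) < card (carrier A)" by (simp add: mem_K_set_iff)
    then show ?thesis using \<open>card (carrier A) \<le> 12\<close> by linarith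
  qed
  interpret two_exceptions A B x y
    using U \<open>x \<noteq> y\<close> \<open>10 \<le> card (carrier A)\<close> small by unfold_locales auto
  have "4 \<le> card (disagree x)" using ceiling_third_le_card_disagree[of x] U q by simp
  then show False using card_disagree_x_le by simp
qed

theorem lemma10p7:
  fixes A :: "('a, 'm) monoid_scheme" and B :: "('a, 'n) monoid_scheme"
    and n :: nat and q :: int and x y :: 'a
  assumes "group A" and "group B"
    and "finite (carrier A)" and "card (carrier A) = n"
    and "carrier B = carrier A"
    and "\<one>\<^bsub>B\<^esub> = \<one>\<^bsub>A\<^esub>"
    and "\<exists>a \<in> carrier A. \<exists>b \<in> carrier A. a \<otimes>\<^bsub>A\<^esub> b \<noteq> a \<otimes>\<^bsub>B\<^esub> b"
    and "q = \<lceil>real n / 3\<rceil>"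
    and "int (card (K_set A B)) = int n - q + 2"
    and "x \<in> carrier A - K_set A B" and "y \<in> carrier A - K_set A B" and "x \<noteq> y"
  shows "\<exists>(v, w) \<in> diff_set A B.
           {v, w, v \<otimes>\<^bsub>A\<^esub> w} \<inter> {x, y} = {}
         \<and> v \<in> carrier A - K_set A B
         \<and> (w \<in> K_set A B \<or> v \<otimes>\<^bsub>A\<^esub> w \<in> K_set A B)"
proof -
  interpret two_groups A B
    using assms(1-3,5,6) by (simp add: two_groups_def two_groups_axioms_def)
  let ?U = "carrier A - K_set A B"
  have "K_set A B \<subseteq> carrier A" by (auto simp: K_set_def)
  then have card_U: "int (card ?U) + 2 = \<lceil>real (card (carrier A)) / 3\<rceil>"
    using assms(3,4,8,9) card_Diff_subset[of "K_set A B"] card_mono[OF assms(3)]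
    by (simp add: finite_subset)
  show ?thesis
  proof (cases "?U \<subseteq> {x, y}")
    case True
    then have "?U = {x, y}" using assms(10,11) by blast
    moreover have "\<lceil>real (card (carrier A)) / 3\<rceil> = 4" using card_U calculation assms(12) by simp
    ultimately show ?thesis using complement_K_set_ne_pair assms(12) by blast
  next
    case False
    then obtain v where "v \<in> ?U" "v \<notin> {x, y}" by blast
    with exists_diff_pair_leaving_complement_K[OF card_U _ _ assms(10,11)] obtain w
      where "(v, w) \<in> diff_set A B" "{v, w, v \<cdot> w} \<inter> {x, y} = {}"
        "w \<in> K_set A B \<or> v \<cdot> w \<in> K_set A B"
      by blast
    with \<open>v \<in> ?U\<close> show ?thesis by blast
  qed
qed

end
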